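(* Let $S$ and $T$ be bottomed linearly ordered sets and let $\psi\colon S\to T$ satisfy: (1) $\psi$ is isotone; (2) if $\psi(x)=\perp_T$ then $x=\perp_S$; (3) $\psi$ is continuous at $\perp_S$, i.e. for every $\epsilon\in T^*$ there exists $\delta\in S^*$ such that $x<\delta$ implies $\psi(x)<\epsilon$. Let $X$ be a topological space and $d\in\mathrm{Ult}(X;S)$. Then $\psi\circ d\in\mathrm{Ult}(X;T)$, $d$ and $\psi\circ d$ generate the same topology on $X$, and moreover they are uniformly equivalent to each other.
   Context: A bottomed linearly ordered set $S$ has a least element $\perp_S$; $S^*=S\setminus\{\perp_S\}$. A map is isotone if $x\le y$ implies $\psi(x)\le\psi(y)$. An $S$-ultrametric on $X$ is $d\colon X\times X\to S$ with $d(x,y)=\perp_S\iff x=y$, $d(x,y)=d(y,x)$, and $d(x,y)\le\max\{d(x,z),d(z,y)\}$; its topology is generated by the open balls $\{y:d(x,y)<\epsilon\}$, $\epsilon\in S^*$. $\mathrm{Ult}(X;S)$ is the set of $S$-ultrametrics generating the topology of $X$. An $S$-ultrametric $d$ and a $T$-ultrametric $e$ on $X$ are uniformly equivalent if for every $\epsilon\in T^*$ there is $\delta\in S^*$ with $d(x,y)<\delta\Rightarrow e(x,y)<\epsilon$, and for every $\epsilon\in S^*$ there is $\delta\in T^*$ with $e(x,y)<\delta\Rightarrow d(x,y)<\epsilon$. *)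

theory Defs
  imports "HOL-Analysis.Analysis"
begin

text \<open>A bottomed linearly ordered set is modelled as a type of class
  \<open>{linorder, order_bot}\<close>; its least element is \<open>bot\<close>, and
  \<open>S\<^sup>* = UNIV - {bot}\<close>.\<close>

definition is_ultrametric :: "'a set \<Rightarrow> ('a \<Rightarrow> 'a \<Rightarrow> 's::{linorder,order_bot}) \<Rightarrow> bool" where
  "is_ultrametric A d \<longleftrightarrow>
     (\<forall>x\<in>A. \<forall>y\<in>A. d x y = bot \<longleftrightarrow> x = y) \<and>
     (\<forall>x\<in>A. \<forall>y\<in>A. d x y = d y x) \<and>
     (\<forall>x\<in>A. \<forall>y\<in>A. \<forall>z\<in>A. d x y \<le> max (d x z) (d z y))"

definition ult_ball :: "'a set \<Rightarrow> ('a \<Rightarrow> 'a \<Rightarrow> 's::{linorder,order_bot}) \<Rightarrow> 'a \<Rightarrow> 's \<Rightarrow> 'a set" where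
  "ult_ball A d x e = {y \<in> A. d x y < e}"

definition ult_topology :: "'a set \<Rightarrow> ('a \<Rightarrow> 'a \<Rightarrow> 's::{linorder,order_bot}) \<Rightarrow> 'a topology" where
  "ult_topology A d = topology_generated_by
     (insert A {ult_ball A d x e | x e. x \<in> A \<and> e \<noteq> bot})"

definition Ult :: "'a topology \<Rightarrow> ('a \<Rightarrow> 'a \<Rightarrow> 's::{linorder,order_bot}) set" where
  "Ult X = {d. is_ultrametric (topspace X) d \<and> ult_topology (topspace X) d = X}"

definition unif_equiv :: "'a set \<Rightarrow> ('a \<Rightarrow> 'a \<Rightarrow> 's::{linorder,order_bot})
                          \<Rightarrow> ('a \<Rightarrow> 'a \<Rightarrow> 't::{linorder,order_bot}) \<Rightarrow> bool" where
  "unif_equiv A d e \<longleftrightarrow>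
     (\<forall>\<epsilon>::'t. \<epsilon> \<noteq> bot \<longrightarrow> (\<exists>\<delta>::'s. \<delta> \<noteq> bot \<and>
        (\<forall>x\<in>A. \<forall>y\<in>A. d x y < \<delta> \<longrightarrow> e x y < \<epsilon>))) \<and>
     (\<forall>\<epsilon>::'s. \<epsilon> \<noteq> bot \<longrightarrow> (\<exists>\<delta>::'t. \<delta> \<noteq> bot \<and>
        (\<forall>x\<in>A. \<forall>y\<in>A. e x y < \<delta> \<longrightarrow> d x y < \<epsilon>)))"

end

theory Submission
  imports Defs
begin

text \<open>An isotone \<open>\<psi>\<close> commutes with \<open>max\<close> and, being continuous at \<open>\<bottom>\<close>, fixes \<open>\<bottom>\<close>; so
  \<open>\<psi> \<circ> d\<close> is again an ultrametric. Continuity at \<open>\<bottom>\<close> makes \<open>d\<close> uniformly finer than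
  \<open>\<psi> \<circ> d\<close>, and conversely \<open>\<psi> (d x y) < \<psi> \<epsilon>\<close> forces \<open>d x y < \<epsilon>\<close> by isotonicity, with
  \<open>\<psi> \<epsilon> \<noteq> \<bottom>\<close> for \<open>\<epsilon> \<noteq> \<bottom>\<close>. For uniformly equivalent ultrametrics, by the strong
  triangle inequality every ball of one contains a ball of the other around each of its points,
  so they generate the same topology.\<close>

definition unif_finer :: "'a set \<Rightarrow> ('a \<Rightarrow> 'a \<Rightarrow> 's::{linorder,order_bot})
                          \<Rightarrow> ('a \<Rightarrow> 'a \<Rightarrow> 't::{linorder,order_bot}) \<Rightarrow> bool" where
  "unif_finer A d e \<longleftrightarrow>
     (\<forall>\<epsilon>::'t. \<epsilon> \<noteq> bot \<longrightarrow> (\<exists>\<delta>::'s. \<delta> \<noteq> bot \<and>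
        (\<forall>x\<in>A. \<forall>y\<in>A. d x y < \<delta> \<longrightarrow> e x y < \<epsilon>)))"

lemma unif_equiv_iff_unif_finer:
  "unif_equiv A d e \<longleftrightarrow> unif_finer A d e \<and> unif_finer A e d"
  unfolding unif_equiv_def unif_finer_def by blast

lemma openin_topology_generated_by_coarsest:
  assumes "\<And>s. s \<in> \<S> \<Longrightarrow> openin U s" and "openin (topology_generated_by \<S>) s"
  shows "openin U s"
  using generate_topology_on_coarsest[OF istopology_openin] assms
  by (metis openin_topology_generated_by_iff)

lemma openin_ult_topology_carrier: "openin (ult_topology A d) A"
  unfolding ult_topology_def by (intro topology_generated_by_Basis) blast

lemma openin_ult_topology_ball:
  "x \<in> A \<Longrightarrow> \<epsilon> \<noteq> bot \<Longrightarrow> openin (ult_topology A d) (ult_ball A d x \<epsilon>)"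
  unfolding ult_topology_def by (intro topology_generated_by_Basis) blast

lemma centre_in_ult_ball:
  assumes "is_ultrametric A d" and "x \<in> A" and "\<epsilon> \<noteq> bot"
  shows "x \<in> ult_ball A d x \<epsilon>"
proof -
  have "d x x = bot" using assms(1,2) unfolding is_ultrametric_def by blast
  then show ?thesis using assms(2,3) by (simp add: ult_ball_def bot.not_eq_extremum)
qed

lemma ult_ball_subset_if_unif_finer:
  assumes e: "is_ultrametric A e"
    and x: "x \<in> A" and y: "y \<in> ult_ball A e x \<epsilon>"
    and \<delta>: "\<forall>y\<in>A. \<forall>z\<in>A. d y z < \<delta> \<longrightarrow> e y z < \<epsilon>"
  shows "ult_ball A d y \<delta> \<subseteq> ult_ball A e x \<epsilon>"
proof
  fix z assume "z \<in> ult_ball A d y \<delta>"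
  then have z: "z \<in> A" and "d y z < \<delta>" by (auto simp: ult_ball_def)
  have "y \<in> A" and "e x y < \<epsilon>" using y by (auto simp: ult_ball_def)
  with \<delta> z \<open>d y z < \<delta>\<close> have "e y z < \<epsilon>" by blast
  moreover have "e x z \<le> max (e x y) (e y z)"
    using e x \<open>y \<in> A\<close> z unfolding is_ultrametric_def by blast
  ultimately have "e x z < \<epsilon>" using \<open>e x y < \<epsilon>\<close> by (simp add: le_less_trans)
  then show "z \<in> ult_ball A e x \<epsilon>" using z by (simp add: ult_ball_def)
qed

lemma openin_ult_topology_ball_if_unif_finer:
  assumes d: "is_ultrametric A d" and e: "is_ultrametric A e"
    and fin: "unif_finer A d e" and x: "x \<in> A" and \<epsilon>: "\<epsilon> \<noteq> bot"
  shows "openin (ult_topology A d) (ult_ball A e x \<epsilon>)"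
proof -
  obtain \<delta> where \<delta>: "\<delta> \<noteq> bot" "\<forall>y\<in>A. \<forall>z\<in>A. d y z < \<delta> \<longrightarrow> e y z < \<epsilon>"
    using fin \<epsilon> unfolding unif_finer_def by blast
  have "\<exists>V. openin (ult_topology A d) V \<and> y \<in> V \<and> V \<subseteq> ult_ball A e x \<epsilon>"
    if y: "y \<in> ult_ball A e x \<epsilon>" for y
  proof (intro exI conjI)
    have "y \<in> A" using y by (simp add: ult_ball_def)
    then show "openin (ult_topology A d) (ult_ball A d y \<delta>)" "y \<in> ult_ball A d y \<delta>"
      using d \<delta>(1) by (simp_all add: openin_ult_topology_ball centre_in_ult_ball)
    show "ult_ball A d y \<delta> \<subseteq> ult_ball A e x \<epsilon>"
      using ult_ball_subset_if_unif_finer[OF e x y \<delta>(2)] .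
  qed
  then show ?thesis by (subst openin_subopen) blast
qed

lemma ult_topology_coarser_if_unif_finer:
  assumes "is_ultrametric A d" and "is_ultrametric A e" and "unif_finer A d e"
    and "openin (ult_topology A e) s"
  shows "openin (ult_topology A d) s"
  using assms(4) unfolding ult_topology_def[of A e]
proof (rule openin_topology_generated_by_coarsest[rotated])
  fix b assume "b \<in> insert A {ult_ball A e x \<epsilon> |x \<epsilon>. x \<in> A \<and> \<epsilon> \<noteq> bot}"
  then show "openin (ult_topology A d) b"
    using openin_ult_topology_carrier openin_ult_topology_ball_if_unif_finer[OF assms(1-3)]
    by blast
qed

lemma ult_topology_eq_if_unif_equiv:
  assumes "is_ultrametric A d" and "is_ultrametric A e" and "unif_equiv A d e"
  shows "ult_topology A e = ult_topology A d"
  using assms ult_topology_coarser_if_unif_finer[of A d e] ult_topology_coarser_if_unif_finer[of A e d]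
  by (auto simp: topology_eq unif_equiv_iff_unif_finer)

lemma bot_fixed_if_continuous_at_bot:
  fixes \<psi> :: "'s::{linorder,order_bot} \<Rightarrow> 't::{linorder,order_bot}"
  assumes cont: "\<And>\<epsilon>. \<epsilon> \<noteq> bot \<Longrightarrow> \<exists>\<delta>. \<delta> \<noteq> bot \<and> (\<forall>x. x < \<delta> \<longrightarrow> \<psi> x < \<epsilon>)"
  shows "\<psi> bot = bot"
proof (rule ccontr)
  assume "\<psi> bot \<noteq> bot"
  then obtain \<delta> where "\<delta> \<noteq> bot" "\<forall>x. x < \<delta> \<longrightarrow> \<psi> x < \<psi> bot" using cont by blast
  then show False by (metis bot.not_eq_extremum less_irrefl)
qed

lemma is_ultrametric_comp_mono:
  fixes \<psi> :: "'s::{linorder,order_bot} \<Rightarrow> 't::{linorder,order_bot}"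
  assumes "mono \<psi>" and "\<And>x. \<psi> x = bot \<longleftrightarrow> x = bot" and "is_ultrametric A d"
  shows "is_ultrametric A (\<lambda>x y. \<psi> (d x y))"
proof -
  have "\<psi> (d x y) \<le> max (\<psi> (d x z)) (\<psi> (d z y))" if "x \<in> A" "y \<in> A" "z \<in> A" for x y z
  proof -
    have "d x y \<le> max (d x z) (d z y)"
      using assms(3) that unfolding is_ultrametric_def by blast
    then show ?thesis by (metis assms(1) max_of_mono monoD)
  qed
  then show ?thesis using assms(2,3) unfolding is_ultrametric_def by auto
qed

lemma unif_finer_comp:
  assumes "\<And>\<epsilon>. \<epsilon> \<noteq> bot \<Longrightarrow> \<exists>\<delta>. \<delta> \<noteq> bot \<and> (\<forall>x. x < \<delta> \<longrightarrow> \<psi> x < \<epsilon>)"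
  shows "unif_finer A d (\<lambda>x y. \<psi> (d x y))"
  using assms unfolding unif_finer_def by blast

lemma unif_finer_comp_mono:
  fixes \<psi> :: "'s::{linorder,order_bot} \<Rightarrow> 't::{linorder,order_bot}"
  assumes "mono \<psi>" and "\<And>x. \<psi> x = bot \<Longrightarrow> x = bot"
  shows "unif_finer A (\<lambda>x y. \<psi> (d x y)) d"
  unfolding unif_finer_def
proof (intro allI impI)
  fix \<epsilon> :: 's assume "\<epsilon> \<noteq> bot"
  then have "\<psi> \<epsilon> \<noteq> bot" using assms(2) by blast
  moreover have "\<psi> (d x y) < \<psi> \<epsilon> \<Longrightarrow> d x y < \<epsilon>" for x y
    using monoD[OF assms(1), of \<epsilon> "d x y"] by (meson not_le)
  ultimately show "\<exists>\<delta>. \<delta> \<noteq> bot \<and> (\<forall>x\<in>A. \<forall>y\<in>A. \<psi> (d x y) < \<delta> \<longrightarrow> d x y < \<epsilon>)"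
    by blast
qed

theorem lemma2p36:
  fixes \<psi> :: "'s::{linorder,order_bot} \<Rightarrow> 't::{linorder,order_bot}"
    and X :: "'a topology"
    and d :: "'a \<Rightarrow> 'a \<Rightarrow> 's"
  assumes iso: "mono \<psi>"
    and bot_refl: "\<And>x. \<psi> x = bot \<Longrightarrow> x = bot"
    and cont: "\<And>\<epsilon>. \<epsilon> \<noteq> bot \<Longrightarrow> \<exists>\<delta>. \<delta> \<noteq> bot \<and> (\<forall>x. x < \<delta> \<longrightarrow> \<psi> x < \<epsilon>)"
    and d: "d \<in> Ult X"
  shows "(\<lambda>x y. \<psi> (d x y)) \<in> Ult X \<and>
         ult_topology (topspace X) (\<lambda>x y. \<psi> (d x y)) = ult_topology (topspace X) d \<and>
         unif_equiv (topspace X) d (\<lambda>x y. \<psi> (d x y))"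
proof -
  have ud: "is_ultrametric (topspace X) d" and td: "ult_topology (topspace X) d = X"
    using d by (auto simp: Ult_def)
  have "\<psi> x = bot \<longleftrightarrow> x = bot" for x
    using bot_refl bot_fixed_if_continuous_at_bot[OF cont] by blast
  then have ue: "is_ultrametric (topspace X) (\<lambda>x y. \<psi> (d x y))"
    using is_ultrametric_comp_mono[OF iso _ ud] by blast
  have eq: "unif_equiv (topspace X) d (\<lambda>x y. \<psi> (d x y))"
    unfolding unif_equiv_iff_unif_finer
    using unif_finer_comp[OF cont] unif_finer_comp_mono[OF iso bot_refl] by blast
  show ?thesis
    using ult_topology_eq_if_unif_equiv[OF ud ue eq] ue eq td by (simp add: Ult_def)
qed

end
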